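(* Let $G$ be a connected simple graph with maximum degree at most $3$ and minimum degree at least $2$, in which no two adjacent vertices both have degree $3$. Let $M_1,M_2$ be disjoint matchings of $G$ such that $|M_1\cup M_2|$ is maximum over all pairs of disjoint matchings, and, subject to this, such that $G_{M_1,M_2}$ has the minimum number of connected components. Let $H$ be the graph with vertex set $E(G)\setminus(M_1\cup M_2)$ in which two distinct edges are adjacent if and only if their distance in $G$ is at most $2$. If $u_1u_2u_3$ is a component of $G_{M_1,M_2}$ that is a path $P_3$, then there is no cycle of $H$ containing both vertices $u_1u_2$ and $u_2u_3$.
   Context: $G_{M_1,M_2}$ denotes the subgraph of $G$ induced by the edge set $E(G)\setminus(M_1\cup M_2)$. $P_k$ denotes a path on $k$ vertices. The distance between two edges of $G$ is the distance between the corresponding vertices in the line graph of $G$. *)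

theory Defs
  imports Main
begin

definition simple_graph :: "'a set \<Rightarrow> 'a set set \<Rightarrow> bool" where
  "simple_graph V E \<longleftrightarrow> finite V \<and> (\<forall>e\<in>E. e \<subseteq> V \<and> card e = 2)"

definition degree :: "'a set set \<Rightarrow> 'a \<Rightarrow> nat" where
  "degree E v = card {e\<in>E. v \<in> e}"

definition adj :: "'a set set \<Rightarrow> 'a \<Rightarrow> 'a \<Rightarrow> bool" where
  "adj E u v \<longleftrightarrow> {u, v} \<in> E"

definition reach :: "'a set set \<Rightarrow> 'a \<Rightarrow> 'a \<Rightarrow> bool" where
  "reach E = (adj E)\<^sup>*\<^sup>*"

definition connected_graph :: "'a set \<Rightarrow> 'a set set \<Rightarrow> bool" where
  "connected_graph V E \<longleftrightarrow> (\<forall>u\<in>V. \<forall>v\<in>V. reach E u v)"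

definition components :: "'a set \<Rightarrow> 'a set set \<Rightarrow> 'a set set" where
  "components V E = {{v\<in>V. reach E u v} | u. u \<in> V}"

definition matching :: "'a set set \<Rightarrow> 'a set set \<Rightarrow> bool" where
  "matching E M \<longleftrightarrow> M \<subseteq> E \<and> (\<forall>e\<in>M. \<forall>f\<in>M. e \<noteq> f \<longrightarrow> e \<inter> f = {})"

text \<open>G_{M1,M2}: subgraph induced by the edge set E - (M1 \<union> M2)
  (vertex set = the vertices covered by these edges).\<close>
definition rem_edges :: "'a set set \<Rightarrow> 'a set set \<Rightarrow> 'a set set \<Rightarrow> 'a set set" where
  "rem_edges E M1 M2 = E - (M1 \<union> M2)"

definition rem_ncomp :: "'a set set \<Rightarrow> 'a set set \<Rightarrow> 'a set set \<Rightarrow> nat" where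
  "rem_ncomp E M1 M2 = card (components (\<Union>(rem_edges E M1 M2)) (rem_edges E M1 M2))"

definition line_adj :: "'a set set \<Rightarrow> 'a set \<Rightarrow> 'a set \<Rightarrow> bool" where
  "line_adj E e f \<longleftrightarrow> e \<in> E \<and> f \<in> E \<and> e \<noteq> f \<and> e \<inter> f \<noteq> {}"

definition edge_dist_le :: "'a set set \<Rightarrow> 'a set \<Rightarrow> 'a set \<Rightarrow> nat \<Rightarrow> bool" where
  "edge_dist_le E e f k \<longleftrightarrow> (\<exists>j\<le>k. (line_adj E ^^ j) e f)"

definition H_adj :: "'a set set \<Rightarrow> 'a set set \<Rightarrow> 'a set set \<Rightarrow> 'a set \<Rightarrow> 'a set \<Rightarrow> bool" where
  "H_adj E M1 M2 e f \<longleftrightarrow> e \<in> rem_edges E M1 M2 \<and> f \<in> rem_edges E M1 M2 \<and> e \<noteq> f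
     \<and> edge_dist_le E e f 2"

definition is_cycle :: "('b \<Rightarrow> 'b \<Rightarrow> bool) \<Rightarrow> 'b list \<Rightarrow> bool" where
  "is_cycle A xs \<longleftrightarrow> length xs \<ge> 3 \<and> distinct xs \<and>
     (\<forall>i<length xs. A (xs ! i) (xs ! ((i + 1) mod length xs)))"

end

(*
  Write R for the unmatched edges and F for the union of the two optimal matchings A and B;
  F has maximum degree two, so each of its components has at most two vertices of degree one.
  Maximality of the pair forbids an edge of R whose ends are both missed by one matching, and,
  via a Kempe switch along a component of F, forces the ends of an edge of R missed by A and by B
  respectively into one component of F. With the degree conditions this makes the centre u2 of
  the P3 unmatched, and each end u1, u3 matched in both A and B, hence of degree three, with
  partners a, b and c, d of degree at most two.

  A cycle of H through u1u2 and u2u3 continues from them to edges of R at a partner of u1 and at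
  a partner of u3. If these partners are matched to u1 and u3 by different matchings, exchanging
  the two matching edges for the two edges of the P3 keeps the size of the pair and merges the
  component u1u2u3 into others, contradicting minimality; if they are matched by the same
  matching and u1, u3 lie in different components of F, a Kempe switch reduces to the first
  case. In the remaining case, say a lies on the edge aa' of R, b on none, and u1, u3 are joined
  in F, the cycle must pass from aa' to an edge at a partner p or q of a'. Moving u1u2 into A and
  u1a into R gives another optimal pair with the isolated P3 u1 a a', to which the first two
  cases apply, the second because u2, c and p would otherwise be three ends of one path of F.
*)
theory Submission
  imports Defs
begin

section \<open>Reachability and connected components\<close>

lemma adj_commute: "adj R u v = adj R v u"
  by (simp add: adj_def insert_commute)

lemma reach_refl [simp]: "reach R u u"
  by (simp add: reach_def)

lemma reach_edge: "{u, v} \<in> R \<Longrightarrow> reach R u v"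
  by (simp add: reach_def adj_def r_into_rtranclp)

lemma reach_trans: "reach R u v \<Longrightarrow> reach R v w \<Longrightarrow> reach R u w"
  unfolding reach_def by (rule rtranclp_trans)

lemma reach_sym: "reach R u v \<Longrightarrow> reach R v u"
  unfolding reach_def
proof (induction rule: rtranclp_induct)
  case (step y z)
  then have "adj R z y" using adj_commute by metis
  then show ?case using step(3) by (rule converse_rtranclp_into_rtranclp)
qed simp

lemma reach_mono: "R \<subseteq> R' \<Longrightarrow> reach R u v \<Longrightarrow> reach R' u v"
  unfolding reach_def adj_def by (erule rtranclp_mono[THEN predicate2D, rotated]) auto

lemma reach_closed:
  assumes "reach R u v" and "\<forall>e\<in>R. e \<inter> S \<noteq> {} \<longrightarrow> e \<subseteq> S" and "u \<in> S"
  shows "v \<in> S"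
  using assms(1) unfolding reach_def
proof (induction rule: rtranclp_induct)
  case (step y z)
  then show ?case using assms(2) by (auto simp: adj_def)
qed (use assms(3) in simp)

lemma reach_in_Union: "reach R u v \<Longrightarrow> u \<in> \<Union>R \<Longrightarrow> v \<in> \<Union>R"
  using reach_closed[of R u v "\<Union>R"] by blast

lemma reach_set_closed:
  assumes "\<forall>e\<in>R. card e = 2" and "e \<in> R" and "e \<inter> {z. reach R v z} \<noteq> {}"
  shows "e \<subseteq> {z. reach R v z}"
proof -
  obtain p q where e: "e = {p, q}" using assms(1,2) by (meson card_2_iff)
  moreover have "{q, p} \<in> R" using assms(2) e by (simp add: insert_commute)
  ultimately have "reach R p q" "reach R q p" using assms(2) reach_edge by auto
  then show ?thesis using assms(3) e by (auto intro: reach_trans)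
qed

lemma reach_avoiding:
  assumes "reach (R \<union> S) u v" and "\<forall>w. reach R u w \<longrightarrow> w \<notin> \<Union>S"
  shows "reach R u v"
  using assms(1) unfolding reach_def
proof (induction rule: rtranclp_induct)
  case (step y z)
  have "y \<notin> \<Union>S" using assms(2) step(3) by (simp add: reach_def)
  then have "adj R y z" using step(2) by (auto simp: adj_def)
  then show ?case by (rule rtranclp.rtrancl_into_rtrancl[OF step(3)])
qed simp

definition ncomp :: "'a set set \<Rightarrow> nat" where
  "ncomp R = card (components (\<Union>R) R)"

lemma rem_ncomp_eq_ncomp: "rem_ncomp E A B = ncomp (rem_edges E A B)"
  by (simp add: rem_ncomp_def ncomp_def)

definition comp_of :: "'a set set \<Rightarrow> 'a \<Rightarrow> 'a set" where
  "comp_of R u = {v\<in>\<Union>R. reach R u v}"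

lemma components_eq_image: "components (\<Union>R) R = comp_of R ` \<Union>R"
  by (auto simp: components_def comp_of_def)

lemma comp_of_subset: "comp_of R u \<subseteq> \<Union>R"
  by (auto simp: comp_of_def)

lemma ncomp_insert_isolated_edge:
  assumes fin: "finite R" "\<forall>e\<in>R. finite e"
    and st: "s \<noteq> t" "s \<notin> \<Union>R" "t \<notin> \<Union>R"
  shows "ncomp (insert {s, t} R) = ncomp R + 1"
proof -
  let ?R = "insert {s, t} R"
  have old: "comp_of ?R u = comp_of R u" if u: "u \<in> \<Union>R" for u
  proof -
    have "reach ?R u v \<longleftrightarrow> reach R u v" for v
    proof
      assume "reach ?R u v"
      then have "reach (R \<union> {{s, t}}) u v" by simp
      moreover have "\<forall>w. reach R u w \<longrightarrow> w \<notin> \<Union>{{s, t}}"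
        using reach_in_Union[OF _ u] st by auto
      ultimately show "reach R u v" by (rule reach_avoiding)
    qed (rule reach_mono[of R], auto)
    then show ?thesis using reach_in_Union[OF _ u] unfolding comp_of_def by blast
  qed
  have new: "comp_of ?R u = {s, t}" if u: "u \<in> {s, t}" for u
  proof
    have "\<forall>e\<in>?R. e \<inter> {s, t} \<noteq> {} \<longrightarrow> e \<subseteq> {s, t}" using st by blast
    then show "comp_of ?R u \<subseteq> {s, t}"
      using reach_closed[OF _ _ u] unfolding comp_of_def by blast
    have "reach ?R s t" "reach ?R t s"
      using reach_edge[of s t ?R] reach_edge[of t s ?R] by (simp_all add: doubleton_eq_iff)
    then have "reach ?R u s \<and> reach ?R u t" using u by auto
    then show "{s, t} \<subseteq> comp_of ?R u" unfolding comp_of_def by simp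
  qed
  have "components (\<Union>?R) ?R = insert (comp_of ?R s) (insert (comp_of ?R t) (comp_of ?R ` \<Union>R))"
    unfolding components_eq_image by simp
  also have "\<dots> = insert {s, t} (components (\<Union>R) R)"
    unfolding components_eq_image using image_cong[OF refl old, of "\<Union>R"] new by simp
  finally have eq: "components (\<Union>?R) ?R = insert {s, t} (components (\<Union>R) R)" .
  have "{s, t} \<notin> components (\<Union>R) R"
  proof
    assume "{s, t} \<in> components (\<Union>R) R"
    then obtain u where "{s, t} = comp_of R u" unfolding components_eq_image by blast
    then show False using comp_of_subset[of R u] st(2) by auto
  qed
  moreover have "finite (components (\<Union>R) R)"
    using fin unfolding components_eq_image by simp
  ultimately show ?thesis unfolding ncomp_def eq by simp
qed

lemma reach_insert_pendant_edge:
  assumes "reach (insert {s, t} R) u v" "u \<in> \<Union>R" "s \<notin> \<Union>R"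
  shows "reach R u v \<or> (v = s \<and> reach R u t)"
  using assms(1) unfolding reach_def[of "insert {s, t} R"]
proof (induction rule: rtranclp_induct)
  case (step y z)
  have "\<not> reach R u s" using reach_in_Union assms(2,3) by metis
  then have IH: "reach R u y \<and> y \<noteq> s \<or> (y = s \<and> reach R u t)" using step(3) by metis
  show ?case
  proof (cases "{y, z} \<in> R")
    case True
    then have "reach R y z" by (rule reach_edge)
    moreover have "y \<noteq> s" using True assms(3) by blast
    ultimately show ?thesis using IH reach_trans by metis
  next
    case False
    then have "{y, z} = {s, t}" using step(2) by (simp add: adj_def)
    then have "(y = s \<and> z = t) \<or> (y = t \<and> z = s)" by (simp add: doubleton_eq_iff)
    then show ?thesis using IH by metis
  qed
qed simp

lemma ncomp_insert_pendant_edge: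
  assumes fin: "finite R" "\<forall>e\<in>R. finite e"
    and st: "s \<notin> \<Union>R" "t \<in> \<Union>R"
  shows "ncomp (insert {s, t} R) = ncomp R"
proof -
  let ?R = "insert {s, t} R"
  define f where "f K = (if t \<in> K then insert s K else K)" for K
  have rst: "reach ?R s t" by (rule reach_edge) simp
  have old: "comp_of ?R u = f (comp_of R u)" if u: "u \<in> \<Union>R" for u
  proof -
    have mono: "reach R x y \<Longrightarrow> reach ?R x y" for x y
      by (rule reach_mono[of R]) auto
    have "reach ?R u v \<longleftrightarrow> reach R u v \<or> (v = s \<and> reach R u t)" for v
    proof
      show "reach R u v \<or> (v = s \<and> reach R u t) \<Longrightarrow> reach ?R u v"
        using mono reach_trans[OF _ reach_sym[OF rst]] by blast
    qed (rule reach_insert_pendant_edge[OF _ u st(1)])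
    moreover have "reach R u v \<Longrightarrow> v \<in> \<Union>R" for v using reach_in_Union[OF _ u] .
    ultimately show ?thesis
      using st unfolding f_def comp_of_def by auto
  qed
  have "comp_of ?R s = comp_of ?R t"
    unfolding comp_of_def by (meson reach_trans reach_sym rst)
  then have "components (\<Union>?R) ?R = comp_of ?R ` \<Union>R"
    unfolding components_eq_image using st(2) by (simp add: insert_absorb)
  also have "\<dots> = (\<lambda>u. f (comp_of R u)) ` \<Union>R"
    by (rule image_cong[OF refl old])
  also have "\<dots> = f ` components (\<Union>R) R"
    unfolding components_eq_image by (rule image_image[symmetric])
  finally have eq: "components (\<Union>?R) ?R = f ` components (\<Union>R) R" .
  have "inj_on f (components (\<Union>R) R)"
  proof (rule inj_onI)
    fix K K' assume "K \<in> components (\<Union>R) R" "K' \<in> components (\<Union>R) R" "f K = f K'"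
    moreover have "f K - {s} = K" if K: "K \<in> components (\<Union>R) R" for K
    proof -
      obtain u where "K = comp_of R u" using K unfolding components_eq_image by blast
      then have "s \<notin> K" using comp_of_subset[of R u] st(1) by blast
      then show ?thesis unfolding f_def by auto
    qed
    ultimately show "K = K'" by metis
  qed
  then show ?thesis unfolding ncomp_def eq by (rule card_image)
qed

lemma ncomp_insert_P3:
  assumes fin: "finite R" "\<forall>e\<in>R. finite e" and distinct: "v1 \<noteq> v2" "v2 \<noteq> v3" "v1 \<noteq> v3"
    and fresh: "v1 \<notin> \<Union>R" "v2 \<notin> \<Union>R" "v3 \<notin> \<Union>R"
  shows "ncomp (insert {v1, v2} (insert {v2, v3} R)) = ncomp R + 1"
proof -
  have "ncomp (insert {v2, v3} R) = ncomp R + 1"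
    by (rule ncomp_insert_isolated_edge[OF fin distinct(2) fresh(2,3)])
  moreover have "ncomp (insert {v1, v2} (insert {v2, v3} R)) = ncomp (insert {v2, v3} R)"
  proof (rule ncomp_insert_pendant_edge)
    show "v1 \<notin> \<Union>(insert {v2, v3} R)" using distinct fresh by simp
  qed (use fin in simp_all)
  ultimately show ?thesis by simp
qed

section \<open>Graphs of maximum degree two\<close>

lemma reach_from_leaf:
  assumes leaf: "{e\<in>R. x \<in> e} = {{x, y}}" and r: "reach R x w"
  shows "w = x \<or> reach (R - {{x, y}}) y w"
  using r unfolding reach_def[of R]
proof (induction rule: rtranclp_induct)
  case (step z w)
  then have zw: "{z, w} \<in> R" by (simp add: adj_def)
  show ?case
  proof (cases "{z, w} = {x, y}")
    case True
    then show ?thesis by (auto simp: doubleton_eq_iff)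
  next
    case False
    have "z \<noteq> x"
    proof
      assume "z = x"
      then have "{z, w} \<in> {e\<in>R. x \<in> e}" using zw by simp
      then show False using leaf False by simp
    qed
    then have "reach (R - {{x, y}}) y z" using step(3) by simp
    moreover have "reach (R - {{x, y}}) z w" using zw False by (simp add: reach_edge)
    ultimately show ?thesis by (blast intro: reach_trans)
  qed
qed simp

lemma degree_one_edgeE:
  assumes "degree R x = 1" "\<forall>e\<in>R. card e = 2"
  obtains y where "{e\<in>R. x \<in> e} = {{x, y}}" "y \<noteq> x"
proof -
  obtain e where e: "{e\<in>R. x \<in> e} = {e}" using assms(1) unfolding degree_def
    by (meson card_1_singletonE)
  then have "card e = 2" "x \<in> e" using assms(2) by auto
  then obtain y where "e = {x, y}" "y \<noteq> x"
    by (metis card_2_iff doubleton_eq_iff insertE singletonD)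
  then show ?thesis using that e by blast
qed

lemma degree_Diff_edge:
  assumes "finite R" "e \<in> R"
  shows "degree (R - {e}) v = (if v \<in> e then degree R v - 1 else degree R v)"
proof -
  have "{f\<in>R - {e}. v \<in> f} = {f\<in>R. v \<in> f} - {e}" by blast
  then show ?thesis unfolding degree_def using assms by auto
qed

lemma max_degree_2_no_three_leaves:
  assumes "finite R" "\<forall>e\<in>R. card e = 2" "\<forall>v. degree R v \<le> 2"
    "degree R x = 1" "degree R y = 1" "degree R z = 1"
    "x \<noteq> y" "x \<noteq> z" "y \<noteq> z" "reach R x y" "reach R x z"
  shows False
  using assms
proof (induction "card R" arbitrary: R x y z rule: less_induct)
  case less
  obtain x1 where leaf: "{e\<in>R. x \<in> e} = {{x, x1}}" and "x1 \<noteq> x"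
    using degree_one_edgeE[OF less.prems(4,2)] .
  have "{x, x1} \<in> {e\<in>R. x \<in> e}" unfolding leaf by simp
  then have edge: "{x, x1} \<in> R" by simp
  show False
  proof (cases "degree R x1 = 1")
    case True
    then obtain e where "{e\<in>R. x1 \<in> e} = {e}"
      unfolding degree_def by (meson card_1_singletonE)
    moreover have "{x, x1} \<in> {e\<in>R. x1 \<in> e}" using edge by simp
    ultimately have leaf1: "{e\<in>R. x1 \<in> e} = {{x, x1}}" by simp
    have "e \<subseteq> {x, x1}" if "e \<in> R" "e \<inter> {x, x1} \<noteq> {}" for e
    proof -
      have "e \<in> {e\<in>R. x \<in> e} \<or> e \<in> {e\<in>R. x1 \<in> e}" using that by blast
      then show ?thesis unfolding leaf leaf1 by auto
    qed
    then have "y \<in> {x, x1}" "z \<in> {x, x1}"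
      using reach_closed[OF less.prems(10), of "{x, x1}"] reach_closed[OF less.prems(11), of "{x, x1}"]
      by auto
    then show False using less.prems(7-9) by auto
  next
    case False
    have "{e\<in>R. x1 \<in> e} \<noteq> {}" using edge by blast
    then have "degree R x1 \<noteq> 0" using less.prems(1) by (simp add: degree_def)
    moreover have "degree R x1 \<le> 2" using less.prems(3) by blast
    ultimately have deg_x1: "degree R x1 = 2" using False by linarith
    define R' where "R' = R - {{x, x1}}"
    have "card R' < card R"
      unfolding R'_def using edge less.prems(1) by (rule card_Diff1_less[rotated])
    have deg': "degree R' v = (if v \<in> {x, x1} then degree R v - 1 else degree R v)" for v
      unfolding R'_def by (rule degree_Diff_edge[OF less.prems(1) edge])
    have "y \<notin> {x, x1}" "z \<notin> {x, x1}" using deg_x1 less.prems(5-8) by auto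
    moreover have "reach R' x1 y" "reach R' x1 z"
      using reach_from_leaf[OF leaf less.prems(10)] reach_from_leaf[OF leaf less.prems(11)]
        less.prems(7,8) unfolding R'_def by auto
    moreover have "\<forall>v. degree R' v \<le> 2" using less.prems(3) deg' by (metis diff_le_self le_trans)
    moreover have "finite R'" "\<forall>e\<in>R'. card e = 2" using less.prems(1,2) unfolding R'_def by auto
    ultimately show False
      using less.hyps[OF \<open>card R' < card R\<close>, of x1 y z] less.prems(5,6,9) deg' deg_x1
      by auto
  qed
qed

section \<open>Matchings and Kempe switches\<close>

lemma matching_unique_edge:
  "matching E M \<Longrightarrow> e \<in> M \<Longrightarrow> f \<in> M \<Longrightarrow> v \<in> e \<Longrightarrow> v \<in> f \<Longrightarrow> e = f"
  unfolding matching_def by blast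

lemma matching_incident_singleton:
  assumes "matching E A" "g \<in> A" "x \<in> g" "x \<notin> \<Union>B"
  shows "{e\<in>A \<union> B. x \<in> e} = {g}"
proof (intro equalityI subsetI)
  fix e assume "e \<in> {e\<in>A \<union> B. x \<in> e}"
  then have "e \<in> A" "x \<in> e" using assms(4) by auto
  then show "e \<in> {g}" using matching_unique_edge[OF assms(1) _ assms(2) _ assms(3)] by blast
qed (use assms(2,3) in auto)

lemma matching_insert:
  "matching E M \<Longrightarrow> {x, y} \<in> E \<Longrightarrow> x \<notin> \<Union>M \<Longrightarrow> y \<notin> \<Union>M \<Longrightarrow> matching E (insert {x, y} M)"
  unfolding matching_def by blast

lemma matching_exchange:
  assumes "matching E M" "{v, w} \<in> M" "{v, x} \<in> E" "x \<notin> \<Union>M"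
  shows "matching E (insert {v, x} (M - {{v, w}}))"
proof (rule matching_insert)
  show "matching E (M - {{v, w}})" using assms(1) by (auto simp: matching_def)
  show "v \<notin> \<Union>(M - {{v, w}})" using matching_unique_edge[OF assms(1,2)] by blast
qed (use assms in auto)

lemma card_incident_matching_le_1:
  assumes "matching E M" "finite M"
  shows "card {e\<in>M. v \<in> e} \<le> 1"
proof -
  have "finite {e\<in>M. v \<in> e}" using assms(2) by simp
  then show ?thesis using matching_unique_edge[OF assms(1)] by (auto simp: card_le_Suc0_iff_eq)
qed

lemma degree_union_matchings_le_2:
  assumes "matching E A" "matching E B" "finite (A \<union> B)"
  shows "degree (A \<union> B) v \<le> 2"
proof -
  have "{e\<in>A \<union> B. v \<in> e} = {e\<in>A. v \<in> e} \<union> {e\<in>B. v \<in> e}" by blast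
  then have "degree (A \<union> B) v \<le> card {e\<in>A. v \<in> e} + card {e\<in>B. v \<in> e}"
    unfolding degree_def by (simp add: card_Un_le)
  moreover have "card {e\<in>A. v \<in> e} \<le> 1" "card {e\<in>B. v \<in> e} \<le> 1"
    using card_incident_matching_le_1 assms by auto
  ultimately show ?thesis by linarith
qed

lemma matching_switch:
  assumes A: "matching E A" and B: "matching E B" and closed: "\<forall>e\<in>B. e \<inter> K \<noteq> {} \<longrightarrow> e \<subseteq> K"
  shows "matching E ({e\<in>A. e \<inter> K = {}} \<union> {e\<in>B. e \<inter> K \<noteq> {}})"
  unfolding matching_def
proof (intro conjI ballI impI)
  show "{e\<in>A. e \<inter> K = {}} \<union> {e\<in>B. e \<inter> K \<noteq> {}} \<subseteq> E"
    using A B by (auto simp: matching_def)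
next
  fix e f
  assume "e \<in> {e\<in>A. e \<inter> K = {}} \<union> {e\<in>B. e \<inter> K \<noteq> {}}" "f \<in> {e\<in>A. e \<inter> K = {}} \<union> {e\<in>B. e \<inter> K \<noteq> {}}"
    and "e \<noteq> f"
  then consider "e \<in> A" "f \<in> A" | "e \<in> B" "f \<in> B" | "e \<inter> K = {}" "f \<subseteq> K" | "e \<subseteq> K" "f \<inter> K = {}"
    using closed by auto
  then show "e \<inter> f = {}"
  proof cases
    case 1
    then show ?thesis using A \<open>e \<noteq> f\<close> unfolding matching_def by blast
  next
    case 2
    then show ?thesis using B \<open>e \<noteq> f\<close> unfolding matching_def by blast
  qed blast+
qed

lemma kempe_switch:
  fixes v :: 'a
  assumes "matching E A" "matching E B" "A \<inter> B = {}" "\<forall>e\<in>A \<union> B. card e = 2"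
  defines "K \<equiv> {z. reach (A \<union> B) v z}"
  defines "A' \<equiv> {e\<in>A. e \<inter> K = {}} \<union> {e\<in>B. e \<inter> K \<noteq> {}}"
    and "B' \<equiv> {e\<in>B. e \<inter> K = {}} \<union> {e\<in>A. e \<inter> K \<noteq> {}}"
  shows "matching E A'" "matching E B'" "A' \<inter> B' = {}" "A' \<union> B' = A \<union> B"
proof -
  have closed: "e \<subseteq> K" if "e \<in> A \<union> B" "e \<inter> K \<noteq> {}" for e
    using reach_set_closed[OF assms(4) that[unfolded K_def]] unfolding K_def .
  show "matching E A'"
    unfolding A'_def by (rule matching_switch[OF assms(1,2)]) (use closed in blast)
  show "matching E B'"
    unfolding B'_def by (rule matching_switch[OF assms(2,1)]) (use closed in blast)
  show "A' \<inter> B' = {}" using assms(3) unfolding A'_def B'_def by blast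
  show "A' \<union> B' = A \<union> B" unfolding A'_def B'_def by blast
qed

definition disjoint_matchings :: "'a set set \<Rightarrow> 'a set set \<Rightarrow> 'a set set \<Rightarrow> bool" where
  "disjoint_matchings E A B \<longleftrightarrow> matching E A \<and> matching E B \<and> A \<inter> B = {}"

definition max_matching_pair :: "'a set set \<Rightarrow> 'a set set \<Rightarrow> 'a set set \<Rightarrow> bool" where
  "max_matching_pair E A B \<longleftrightarrow> disjoint_matchings E A B \<and>
     (\<forall>N1 N2. disjoint_matchings E N1 N2 \<longrightarrow> card (N1 \<union> N2) \<le> card (A \<union> B))"

definition opt_matching_pair :: "'a set set \<Rightarrow> 'a set set \<Rightarrow> 'a set set \<Rightarrow> bool" where
  "opt_matching_pair E A B \<longleftrightarrow> max_matching_pair E A B \<and>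
     (\<forall>N1 N2. max_matching_pair E N1 N2 \<longrightarrow> rem_ncomp E A B \<le> rem_ncomp E N1 N2)"

lemma rem_edges_commute: "rem_edges E A B = rem_edges E B A"
  by (auto simp: rem_edges_def)

lemma disjoint_matchings_commute: "disjoint_matchings E A B = disjoint_matchings E B A"
  by (auto simp: disjoint_matchings_def)

lemma max_matching_pair_commute: "max_matching_pair E A B = max_matching_pair E B A"
  by (simp add: max_matching_pair_def disjoint_matchings_commute Un_commute)

lemma opt_matching_pair_commute: "opt_matching_pair E A B = opt_matching_pair E B A"
  by (simp add: opt_matching_pair_def max_matching_pair_commute rem_ncomp_def rem_edges_commute)

lemma max_matching_pair_cardI:
  assumes "max_matching_pair E A B" "disjoint_matchings E A' B'" "card (A' \<union> B') = card (A \<union> B)"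
  shows "max_matching_pair E A' B'"
  using assms unfolding max_matching_pair_def by simp

lemma opt_matching_pair_ncomp_le:
  assumes "opt_matching_pair E A B" "disjoint_matchings E A' B'" "card (A' \<union> B') = card (A \<union> B)"
  shows "rem_ncomp E A B \<le> rem_ncomp E A' B'"
  using assms max_matching_pair_cardI unfolding opt_matching_pair_def by blast

lemma opt_matching_pairI:
  assumes "opt_matching_pair E A B" "disjoint_matchings E A' B'" "card (A' \<union> B') = card (A \<union> B)"
    and "rem_ncomp E A' B' \<le> rem_ncomp E A B"
  shows "opt_matching_pair E A' B'"
  using assms max_matching_pair_cardI unfolding opt_matching_pair_def by fastforce

lemma opt_matching_pair_same_union:
  assumes "opt_matching_pair E A B" "disjoint_matchings E A' B'" "A' \<union> B' = A \<union> B"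
  shows "opt_matching_pair E A' B'"
  using assms(3) by (intro opt_matching_pairI[OF assms(1,2)]) (simp_all add: rem_ncomp_def rem_edges_def)

locale sgraph =
  fixes V :: "'a set" and E :: "'a set set"
  assumes simple: "simple_graph V E"
begin

lemma edge_subset: "e \<in> E \<Longrightarrow> e \<subseteq> V"
  using simple by (simp add: simple_graph_def)

lemma card_edge: "e \<in> E \<Longrightarrow> card e = 2"
  using simple by (simp add: simple_graph_def)

lemma finite_E: "finite E"
proof -
  have "E \<subseteq> Pow V" using edge_subset by blast
  then show ?thesis using simple by (meson finite_Pow_iff rev_finite_subset simple_graph_def)
qed

lemma finite_edge: "e \<in> E \<Longrightarrow> finite e"
  using card_edge by (metis card.infinite zero_neq_numeral)

lemma edge_neq: "{p, q} \<in> E \<Longrightarrow> p \<noteq> q"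
  using card_edge by fastforce

lemma edge_obtain:
  assumes "e \<in> E" "v \<in> e"
  obtains w where "e = {v, w}" "w \<noteq> v"
proof -
  obtain p q where "e = {p, q}" "p \<noteq> q" using card_edge[OF assms(1)] by (meson card_2_iff)
  then show ?thesis using that assms(2) by (metis insert_commute insertE singletonD)
qed

lemma finite_subset_E: "S \<subseteq> E \<Longrightarrow> finite S"
  using finite_E by (rule rev_finite_subset)

lemma rem_edges_subset: "rem_edges E A B \<subseteq> E"
  by (auto simp: rem_edges_def)

lemma matching_subset: "matching E M \<Longrightarrow> M \<subseteq> E"
  by (simp add: matching_def)

lemma max_matching_pair_augment:
  assumes "max_matching_pair E A B" "{x, y} \<in> rem_edges E A B"
  shows "x \<in> \<Union>B \<or> y \<in> \<Union>B"
proof (rule ccontr)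
  assume "\<not> (x \<in> \<Union>B \<or> y \<in> \<Union>B)"
  moreover have xy: "{x, y} \<in> E" "{x, y} \<notin> A \<union> B" using assms(2) by (auto simp: rem_edges_def)
  moreover have AB: "matching E A" "matching E B" "A \<inter> B = {}"
    using assms(1) by (auto simp: max_matching_pair_def disjoint_matchings_def)
  ultimately have "disjoint_matchings E A (insert {x, y} B)"
    unfolding disjoint_matchings_def using matching_insert[OF AB(2) xy(1)] by auto
  then have "card (insert {x, y} (A \<union> B)) \<le> card (A \<union> B)"
    using assms(1) unfolding max_matching_pair_def by (metis Un_insert_right)
  moreover have "finite (A \<union> B)" using AB matching_subset finite_subset_E by blast
  ultimately show False using xy(2) by simp
qed

text \<open>If x is missed by A and y by B but they lie in different components of A \<union> B,
  switching the component of x frees x in B as well, and {x, y} would augment B.\<close>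
lemma max_matching_pair_kempe:
  assumes max: "max_matching_pair E A B" and xy: "{x, y} \<in> rem_edges E A B"
    and x: "x \<notin> \<Union>A" and y: "y \<notin> \<Union>B"
  shows "reach (A \<union> B) x y"
proof (rule ccontr)
  assume "\<not> reach (A \<union> B) x y"
  define K where "K = {z. reach (A \<union> B) x z}"
  define A' where "A' = {e\<in>A. e \<inter> K = {}} \<union> {e\<in>B. e \<inter> K \<noteq> {}}"
  define B' where "B' = {e\<in>B. e \<inter> K = {}} \<union> {e\<in>A. e \<inter> K \<noteq> {}}"
  have AB: "matching E A" "matching E B" "A \<inter> B = {}"
    using max by (auto simp: max_matching_pair_def disjoint_matchings_def)
  have two: "\<forall>e\<in>A \<union> B. card e = 2" using AB matching_subset card_edge by blast
  note switch = kempe_switch[OF AB two, of x, folded K_def, folded A'_def B'_def]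
  have "x \<in> K" "y \<notin> K" unfolding K_def using \<open>\<not> reach (A \<union> B) x y\<close> by auto
  have "e \<subseteq> K" if "e \<in> A" "e \<inter> K \<noteq> {}" for e
    using reach_set_closed[OF two _ that(2)[unfolded K_def]] that(1) unfolding K_def by blast
  then have "\<not> (e \<in> B' \<and> (x \<in> e \<or> y \<in> e))" for e
    using x y \<open>x \<in> K\<close> \<open>y \<notin> K\<close> unfolding B'_def by blast
  then have "x \<notin> \<Union>B'" "y \<notin> \<Union>B'" by blast+
  moreover have "max_matching_pair E A' B'"
    using max_matching_pair_cardI[OF max] switch unfolding disjoint_matchings_def by simp
  moreover have "{x, y} \<in> rem_edges E A' B'" using xy switch(4) by (simp add: rem_edges_def)
  ultimately show False using max_matching_pair_augment by metis
qed

lemma matchings_no_three_leaves: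
  assumes "matching E A" "matching E B"
    and "{e\<in>A \<union> B. x \<in> e} = {ex}" "{e\<in>A \<union> B. y \<in> e} = {ey}" "{e\<in>A \<union> B. z \<in> e} = {ez}"
    and "x \<noteq> y" "x \<noteq> z" "y \<noteq> z" "reach (A \<union> B) x y" "reach (A \<union> B) x z"
  shows False
proof (rule max_degree_2_no_three_leaves[of "A \<union> B" x y z])
  have "A \<union> B \<subseteq> E" using assms(1,2) matching_subset by blast
  then show "finite (A \<union> B)" "\<forall>e\<in>A \<union> B. card e = 2"
    using finite_subset_E card_edge by blast+
  then show "\<forall>v. degree (A \<union> B) v \<le> 2"
    using degree_union_matchings_le_2[OF assms(1,2)] by blast
qed (use assms(3-) in \<open>simp_all add: degree_def\<close>)

lemma matching_pair_exchange:
  assumes AB: "disjoint_matchings E A B" and vw: "{v, w} \<in> A"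
    and vx: "{v, x} \<in> rem_edges E A B" and x: "x \<notin> \<Union>A"
  defines "A' \<equiv> insert {v, x} (A - {{v, w}})"
  shows "disjoint_matchings E A' B" "card (A' \<union> B) = card (A \<union> B)"
    "rem_edges E A' B = insert {v, w} (rem_edges E A B - {{v, x}})"
proof -
  have A: "matching E A" and B: "matching E B" and "A \<inter> B = {}"
    using AB by (auto simp: disjoint_matchings_def)
  have vxE: "{v, x} \<in> E" "{v, x} \<notin> A" "{v, x} \<notin> B" using vx by (auto simp: rem_edges_def)
  have "matching E A'" unfolding A'_def by (rule matching_exchange[OF A vw vxE(1) x])
  then show "disjoint_matchings E A' B"
    unfolding disjoint_matchings_def A'_def using B \<open>A \<inter> B = {}\<close> vxE by blast
  have "{v, w} \<notin> B" using vw \<open>A \<inter> B = {}\<close> by blast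
  then have "A' \<union> B = insert {v, x} ((A \<union> B) - {{v, w}})" unfolding A'_def by blast
  moreover have "finite (A \<union> B)" using A B matching_subset finite_subset_E by blast
  moreover have "card (A \<union> B) > 0" using calculation(2) vw card_gt_0_iff by blast
  ultimately show "card (A' \<union> B) = card (A \<union> B)"
    using vw vxE by simp
  have "{v, w} \<in> E" using vw A matching_subset by blast
  then show "rem_edges E A' B = insert {v, w} (rem_edges E A B - {{v, x}})"
    unfolding rem_edges_def A'_def using vw \<open>{v, w} \<notin> B\<close> vxE by auto
qed

end

section \<open>Isolated paths and the auxiliary graph\<close>

definition isolated_P3 :: "'a set set \<Rightarrow> 'a \<Rightarrow> 'a \<Rightarrow> 'a \<Rightarrow> bool" where
  "isolated_P3 R u1 u2 u3 \<longleftrightarrow> {u1, u2} \<in> R \<and> {u2, u3} \<in> R \<and> u1 \<noteq> u3 \<and>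
     (\<forall>e\<in>R. e \<inter> {u1, u2, u3} \<noteq> {} \<longrightarrow> e = {u1, u2} \<or> e = {u2, u3})"

lemma isolated_P3_commute: "isolated_P3 R u1 u2 u3 = isolated_P3 R u3 u2 u1"
  unfolding isolated_P3_def
  by (simp add: insert_commute disj_commute conj_commute conj_left_commute eq_commute[of u1 u3])

lemma component_isolated_P3:
  assumes two: "\<forall>e\<in>R. card e = 2"
    and comp: "{u1, u2, u3} \<in> components (\<Union>R) R"
    and R: "{u1, u2} \<in> R" "{u2, u3} \<in> R" "{u1, u3} \<notin> R" "u1 \<noteq> u3"
  shows "isolated_P3 R u1 u2 u3"
  unfolding isolated_P3_def
proof (intro conjI ballI impI R(1,2,4))
  fix e assume e: "e \<in> R" "e \<inter> {u1, u2, u3} \<noteq> {}"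
  obtain w where w: "{u1, u2, u3} = {v\<in>\<Union>R. reach R w v}" using comp unfolding components_def by blast
  have closed: "z \<in> {u1, u2, u3}" if "reach R u z" "u \<in> {u1, u2, u3}" "z \<in> \<Union>R" for u z
  proof -
    have "reach R w u" using that(2) w by blast
    then have "reach R w z" using that(1) by (rule reach_trans)
    then show ?thesis using w that(3) by blast
  qed
  obtain p q where pq: "e = {p, q}" using two e(1) by (meson card_2_iff)
  have pq_reach: "reach R p q" using e(1) pq reach_edge by simp
  then have "reach R q p" by (rule reach_sym)
  note pq_reach this
  moreover have "p \<in> \<Union>R" "q \<in> \<Union>R" using e(1) pq by auto
  moreover have "p \<in> {u1, u2, u3} \<or> q \<in> {u1, u2, u3}" using e(2) pq by auto
  ultimately have "p \<in> {u1, u2, u3}" "q \<in> {u1, u2, u3}"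
    using closed[of p q] closed[of q p] by blast+
  moreover have "p \<noteq> q" using two e(1) pq by fastforce
  moreover have "{u1, u3} \<notin> R" "{u3, u1} \<notin> R" using R(3) by (simp_all add: insert_commute)
  ultimately show "e = {u1, u2} \<or> e = {u2, u3}"
    using pq e(1) by (auto simp: doubleton_eq_iff)
qed

lemma ncomp_remove_isolated_P3:
  assumes "finite R" "\<forall>e\<in>R. finite e" "isolated_P3 R u1 u2 u3" "u1 \<noteq> u2" "u2 \<noteq> u3"
  shows "ncomp R = ncomp (R - {{u1, u2}, {u2, u3}}) + 1"
proof -
  let ?R0 = "R - {{u1, u2}, {u2, u3}}"
  have "R = insert {u1, u2} (insert {u2, u3} ?R0)" using assms(3) unfolding isolated_P3_def by blast
  moreover have "v \<notin> \<Union>?R0" if "v \<in> {u1, u2, u3}" for v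
    using assms(3) that unfolding isolated_P3_def by blast
  ultimately show ?thesis
    using ncomp_insert_P3[of ?R0 u1 u2 u3] assms(1,2,4,5) assms(3)[unfolded isolated_P3_def] by simp
qed

definition near :: "'a set set \<Rightarrow> 'a set \<Rightarrow> 'a set \<Rightarrow> bool" where
  "near E e f \<longleftrightarrow> e \<inter> f \<noteq> {} \<or> (\<exists>g\<in>E. g \<inter> e \<noteq> {} \<and> g \<inter> f \<noteq> {})"

lemma near_commute: "near E e f = near E f e"
  unfolding near_def by blast

lemma H_adj_commute: "H_adj E B A = H_adj E A B"
  by (simp add: fun_eq_iff H_adj_def rem_edges_commute)

lemma H_adj_near:
  assumes "H_adj E A B e f"
  shows "e \<in> rem_edges E A B" "f \<in> rem_edges E A B" "e \<noteq> f" "near E e f"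
proof -
  show "e \<in> rem_edges E A B" "f \<in> rem_edges E A B" "e \<noteq> f" using assms by (auto simp: H_adj_def)
  obtain j where j: "j \<le> 2" "(line_adj E ^^ j) e f"
    using assms unfolding H_adj_def edge_dist_le_def by blast
  then consider "(line_adj E ^^ 0) e f" | "(line_adj E ^^ 1) e f" | "(line_adj E ^^ 2) e f"
    by (metis le_SucE numeral_2_eq_2 One_nat_def le_zero_eq)
  then show "near E e f"
  proof cases
    case 1 then show ?thesis using \<open>e \<noteq> f\<close> by simp
  next
    case 2 then show ?thesis unfolding near_def line_adj_def by auto
  next
    case 3
    then obtain g where "line_adj E e g" "line_adj E g f"
      by (auto simp: numeral_2_eq_2 relpowp_Suc_left OO_def)
    then show ?thesis unfolding near_def line_adj_def by blast
  qed
qed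

lemma is_cycle_neighbours:
  assumes cyc: "is_cycle A xs" and z: "z \<in> set xs"
  obtains z1 z2 where "z1 \<in> set xs" "z2 \<in> set xs" "z1 \<noteq> z2" "z1 \<noteq> z" "z2 \<noteq> z" "A z z1" "A z2 z"
proof -
  let ?n = "length xs"
  have n: "?n \<ge> 3" "distinct xs" and ad: "\<forall>i<?n. A (xs ! i) (xs ! ((i + 1) mod ?n))"
    using cyc unfolding is_cycle_def by auto
  obtain i where i: "i < ?n" "xs ! i = z" using z by (meson in_set_conv_nth)
  define k where "k = (if i = ?n - 1 then 0 else i + 1)"
  define j where "j = (if i = 0 then ?n - 1 else i - 1)"
  have k: "k < ?n" "k = (i + 1) mod ?n" using i n unfolding k_def by (auto simp: mod_if)
  have j: "j < ?n \<and> (j + 1) mod ?n = i"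
  proof (cases "i = 0")
    case True
    then have "j = ?n - 1" "?n - 1 + 1 = ?n" using n(1) unfolding j_def by auto
    then show ?thesis using True by simp
  next
    case False
    then have "j + 1 = i" unfolding j_def by simp
    then show ?thesis using i(1) by simp
  qed
  have "k \<noteq> j" "k \<noteq> i" "j \<noteq> i" using i n unfolding k_def j_def by (auto split: if_splits)
  then have "xs ! k \<noteq> xs ! j" "xs ! k \<noteq> z" "xs ! j \<noteq> z"
    using k(1) j(1) i n(2) by (auto simp: nth_eq_iff_index_eq)
  moreover have "A z (xs ! k)" "A (xs ! j) z" using ad i k j by metis+
  ultimately show ?thesis using k(1) j by (intro that) simp_all
qed


section \<open>Subcubic graphs\<close>

locale subcubic_graph = sgraph +
  assumes degree_le_3: "\<forall>v\<in>V. degree E v \<le> 3"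
    and degree_3_nonadjacent: "\<forall>u v. {u, v} \<in> E \<longrightarrow> \<not> (degree E u = 3 \<and> degree E v = 3)"
begin

lemma degree_edge_le_3: "e \<in> E \<Longrightarrow> v \<in> e \<Longrightarrow> degree E v \<le> 3"
  using degree_le_3 edge_subset by blast

lemma card_le_degree: "S \<subseteq> {e\<in>E. v \<in> e} \<Longrightarrow> card S \<le> degree E v"
  unfolding degree_def using finite_E by (simp add: card_mono)

lemma incident_edges_eq:
  assumes "S \<subseteq> {e\<in>E. v \<in> e}" "degree E v \<le> card S"
  shows "{e\<in>E. v \<in> e} = S"
proof -
  have "finite {e\<in>E. v \<in> e}" using finite_E by simp
  then show ?thesis using assms unfolding degree_def by (metis card_seteq)
qed

lemma degree_neighbour_of_degree_3:
  assumes "{u, w} \<in> E" "degree E u = 3"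
  shows "degree E w \<le> 2"
  using degree_3_nonadjacent degree_edge_le_3[OF assms(1), of w] assms by fastforce

lemma doubly_matched_vertex:
  assumes AB: "disjoint_matchings E A B"
    and um: "{u, m} \<in> rem_edges E A B" and ua: "{u, a} \<in> A" and ub: "{u, b} \<in> B"
  shows "{e\<in>E. u \<in> e} = {{u, m}, {u, a}, {u, b}}" "degree E u = 3"
    "degree E a \<le> 2" "degree E b \<le> 2"
proof -
  have "A \<subseteq> E" "B \<subseteq> E" "A \<inter> B = {}"
    using AB matching_subset by (auto simp: disjoint_matchings_def)
  moreover have umE: "{u, m} \<in> E" "{u, m} \<notin> A" "{u, m} \<notin> B" using um by (auto simp: rem_edges_def)
  ultimately have sub: "{{u, m}, {u, a}, {u, b}} \<subseteq> {e\<in>E. u \<in> e}" and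
    "card {{u, m}, {u, a}, {u, b}} = 3"
    using ua ub by (auto simp: card_insert_if)
  then show deg: "degree E u = 3"
    using card_le_degree[OF sub] degree_edge_le_3[OF umE(1), of u] by simp
  then show "{e\<in>E. u \<in> e} = {{u, m}, {u, a}, {u, b}}"
    using incident_edges_eq[OF sub] \<open>card {{u, m}, {u, a}, {u, b}} = 3\<close> by simp
  show "degree E a \<le> 2" "degree E b \<le> 2"
    using degree_neighbour_of_degree_3[OF _ deg] ua ub \<open>A \<subseteq> E\<close> \<open>B \<subseteq> E\<close> by blast+
qed

lemma max_matching_pair_next_to_degree_3:
  assumes max: "max_matching_pair E A B" and uw: "{u, w} \<in> rem_edges E A B"
    and deg_w: "degree E w = 3" and w: "w \<notin> \<Union>B"
  obtains g where "{e\<in>A \<union> B. u \<in> e} = {g}" "reach (A \<union> B) u w"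
proof -
  have A: "matching E A" and B: "matching E B" and "A \<inter> B = {}"
    using max by (auto simp: max_matching_pair_def disjoint_matchings_def)
  have uE: "{u, w} \<in> E" "{u, w} \<notin> A \<union> B" using uw by (auto simp: rem_edges_def)
  have "degree E u \<le> 2"
    using degree_neighbour_of_degree_3[of w u] uE(1) deg_w by (simp add: insert_commute)
  obtain g where g: "g \<in> B" "u \<in> g"
    using max_matching_pair_augment[OF max uw] w by blast
  have "u \<notin> \<Union>A"
  proof
    assume "u \<in> \<Union>A"
    then obtain f where f: "f \<in> A" "u \<in> f" by blast
    have "f \<noteq> g" "f \<noteq> {u, w}" "g \<noteq> {u, w}" using f g uE \<open>A \<inter> B = {}\<close> by auto
    then have "card {{u, w}, g, f} = 3" by simp
    moreover have "{{u, w}, g, f} \<subseteq> {e\<in>E. u \<in> e}"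
      using f g uE A B matching_subset by auto
    then have "card {{u, w}, g, f} \<le> degree E u" by (rule card_le_degree)
    ultimately show False using \<open>degree E u \<le> 2\<close> by simp
  qed
  show thesis
  proof
    show "{e\<in>A \<union> B. u \<in> e} = {g}"
      using matching_incident_singleton[OF B g] \<open>u \<notin> \<Union>A\<close> by (simp add: Un_commute)
    show "reach (A \<union> B) u w" by (rule max_matching_pair_kempe[OF max uw \<open>u \<notin> \<Union>A\<close> w])
  qed
qed

lemma max_matching_pair_centre_unmatched_left:
  assumes max: "max_matching_pair E A B"
    and x: "{u1, u2} \<in> rem_edges E A B" and y: "{u2, u3} \<in> rem_edges E A B" and "u1 \<noteq> u3"
  shows "u2 \<notin> \<Union>A"
proof
  assume "u2 \<in> \<Union>A"
  then obtain h where h: "h \<in> A" "u2 \<in> h" by blast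
  have A: "matching E A" and B: "matching E B" and "A \<inter> B = {}"
    using max by (auto simp: max_matching_pair_def disjoint_matchings_def)
  have xE: "{u1, u2} \<in> E" "{u1, u2} \<notin> A \<union> B" and yE: "{u2, u3} \<in> E" "{u2, u3} \<notin> A \<union> B"
    using x y by (auto simp: rem_edges_def)
  have "{u1, u2} \<noteq> {u2, u3}" using \<open>u1 \<noteq> u3\<close> by (auto simp: doubleton_eq_iff)
  moreover have "h \<noteq> {u1, u2}" "h \<noteq> {u2, u3}" using h xE yE by auto
  ultimately have "card {{u1, u2}, {u2, u3}, h} = 3" by simp
  moreover have sub: "{{u1, u2}, {u2, u3}, h} \<subseteq> {e\<in>E. u2 \<in> e}"
    using xE yE h A matching_subset by auto
  ultimately have deg2: "degree E u2 = 3"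
    using card_le_degree[OF sub] degree_edge_le_3[OF xE(1), of u2] by simp
  have incident: "{e\<in>E. u2 \<in> e} = {{u1, u2}, {u2, u3}, h}"
    using incident_edges_eq[OF sub] deg2 \<open>card {{u1, u2}, {u2, u3}, h} = 3\<close> by simp
  have "u2 \<notin> \<Union>B"
  proof
    assume "u2 \<in> \<Union>B"
    then obtain e where "e \<in> B" "u2 \<in> e" by blast
    then have "e \<in> {{u1, u2}, {u2, u3}, h}" using incident B matching_subset by blast
    then show False using \<open>e \<in> B\<close> xE yE h \<open>A \<inter> B = {}\<close> by blast
  qed
  obtain g1 where g1: "{e\<in>A \<union> B. u1 \<in> e} = {g1}" "reach (A \<union> B) u1 u2"
    using max_matching_pair_next_to_degree_3[OF max x deg2 \<open>u2 \<notin> \<Union>B\<close>] .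
  have y': "{u3, u2} \<in> rem_edges E A B" using y by (simp add: insert_commute)
  obtain g3 where g3: "{e\<in>A \<union> B. u3 \<in> e} = {g3}" "reach (A \<union> B) u3 u2"
    using max_matching_pair_next_to_degree_3[OF max y' deg2 \<open>u2 \<notin> \<Union>B\<close>] .
  have h2: "{e\<in>A \<union> B. u2 \<in> e} = {h}"
    by (rule matching_incident_singleton[OF A h \<open>u2 \<notin> \<Union>B\<close>])
  have "u2 \<noteq> u1" using edge_neq[OF xE(1)] by simp
  moreover have "u2 \<noteq> u3" using edge_neq[OF yE(1)] .
  ultimately show False
    using matchings_no_three_leaves[OF A B h2 g1(1) g3(1) _ _ \<open>u1 \<noteq> u3\<close>
        reach_sym[OF g1(2)] reach_sym[OF g3(2)]] by blast
qed

lemma max_matching_pair_centre_unmatched: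
  assumes "max_matching_pair E A B"
    and "{u1, u2} \<in> rem_edges E A B" "{u2, u3} \<in> rem_edges E A B" "u1 \<noteq> u3"
  shows "u2 \<notin> \<Union>(A \<union> B)"
  using max_matching_pair_centre_unmatched_left[OF assms]
    max_matching_pair_centre_unmatched_left[of B A u1 u2 u3] assms
  by (simp add: max_matching_pair_commute rem_edges_commute)

lemma max_matching_pair_end_partners:
  assumes max: "max_matching_pair E A B" and uu2: "{u, u2} \<in> rem_edges E A B"
    and centre: "u2 \<notin> \<Union>(A \<union> B)"
  obtains a b where "{u, a} \<in> A" "{u, b} \<in> B"
proof -
  have "u \<in> \<Union>B" using max_matching_pair_augment[OF max uu2] centre by blast
  moreover have "u \<in> \<Union>A"
    using max_matching_pair_augment[of B A u u2] max uu2 centre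
    by (auto simp: max_matching_pair_commute rem_edges_commute)
  moreover have "A \<subseteq> E" "B \<subseteq> E"
    using max matching_subset by (auto simp: max_matching_pair_def disjoint_matchings_def)
  ultimately show ?thesis using that edge_obtain by (metis UnionE subsetD)
qed

end

section \<open>An isolated P3 between optimal matchings\<close>

locale P3_config = subcubic_graph +
  fixes A B :: "'a set set" and u1 u2 u3 a b c d :: 'a
  assumes opt: "opt_matching_pair E A B"
    and P3: "isolated_P3 (rem_edges E A B) u1 u2 u3"
    and centre: "u2 \<notin> \<Union>(A \<union> B)"
    and u1a: "{u1, a} \<in> A" and u1b: "{u1, b} \<in> B"
    and u3c: "{u3, c} \<in> A" and u3d: "{u3, d} \<in> B"
begin

abbreviation R :: "'a set set" where
  "R \<equiv> rem_edges E A B"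

abbreviation R0 :: "'a set set" where
  "R0 \<equiv> R - {{u1, u2}, {u2, u3}}"

lemma P3_config_swap: "P3_config V E B A u1 u2 u3 b a d c"
  unfolding P3_config_def P3_config_axioms_def
  using subcubic_graph_axioms opt P3 centre u1a u1b u3c u3d
  by (simp add: opt_matching_pair_commute rem_edges_commute Un_commute)

lemma P3_config_reverse: "P3_config V E A B u3 u2 u1 c d a b"
  unfolding P3_config_def P3_config_axioms_def
  using subcubic_graph_axioms opt P3 centre u1a u1b u3c u3d
  by (simp add: isolated_P3_commute[of _ u1])

lemma max: "max_matching_pair E A B"
  using opt by (simp add: opt_matching_pair_def)

lemma disjoint: "disjoint_matchings E A B"
  using max by (simp add: max_matching_pair_def)

lemma matching_A: "matching E A" and matching_B: "matching E B" and A_Int_B: "A \<inter> B = {}"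
  using disjoint by (simp_all add: disjoint_matchings_def)

lemma A_subset: "A \<subseteq> E" and B_subset: "B \<subseteq> E"
  using matching_A matching_B by (simp_all add: matching_subset)

lemma u1u2: "{u1, u2} \<in> R" and u2u3: "{u2, u3} \<in> R" and u1_neq_u3: "u1 \<noteq> u3"
  using P3 by (simp_all add: isolated_P3_def)

lemma rem_edge_in_E: "e \<in> R \<Longrightarrow> e \<in> E"
  using rem_edges_subset by blast

lemma u1_neq_u2: "u1 \<noteq> u2" and u2_neq_u3: "u2 \<noteq> u3"
  using edge_neq[OF rem_edge_in_E[OF u1u2]] edge_neq[OF rem_edge_in_E[OF u2u3]] .

lemma isolated: "e \<in> R \<Longrightarrow> e \<inter> {u1, u2, u3} \<noteq> {} \<Longrightarrow> e = {u1, u2} \<or> e = {u2, u3}"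
  using P3 unfolding isolated_P3_def by blast

lemma incident_u1: "{e\<in>E. u1 \<in> e} = {{u1, u2}, {u1, a}, {u1, b}}"
  and degree_u1: "degree E u1 = 3" and degree_a: "degree E a \<le> 2" and degree_b: "degree E b \<le> 2"
  using doubly_matched_vertex[OF disjoint u1u2 u1a u1b] by simp_all

lemma incident_u2: "{e\<in>E. u2 \<in> e} = {{u1, u2}, {u2, u3}}"
proof (intro equalityI subsetI)
  fix e assume e: "e \<in> {e\<in>E. u2 \<in> e}"
  then have "e \<in> R" using centre by (auto simp: rem_edges_def)
  then show "e \<in> {{u1, u2}, {u2, u3}}" using isolated e by blast
qed (use rem_edge_in_E[OF u1u2] rem_edge_in_E[OF u2u3] in auto)

lemma degree_u3: "degree E u3 = 3"
proof -
  interpret rev: P3_config V E A B u3 u2 u1 c d a b by (rule P3_config_reverse)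
  show ?thesis by (rule rev.degree_u1)
qed

lemma partner_neq: "a \<noteq> u1" "a \<noteq> u2" "a \<noteq> u3" "b \<noteq> u1" "b \<noteq> u2" "b \<noteq> u3"
proof -
  have "u1 \<noteq> a" "u1 \<noteq> b"
    using edge_neq[OF subsetD[OF A_subset u1a]] edge_neq[OF subsetD[OF B_subset u1b]] .
  then show "a \<noteq> u1" "b \<noteq> u1" by auto
  show "a \<noteq> u2" "b \<noteq> u2" using u1a u1b centre by auto
  show "a \<noteq> u3" "b \<noteq> u3" using degree_a degree_b degree_u3 by auto
qed

lemma not_in_R0: "u1 \<notin> \<Union>R0" "u2 \<notin> \<Union>R0" "u3 \<notin> \<Union>R0"
proof -
  have "v \<notin> \<Union>R0" if v: "v \<in> {u1, u2, u3}" for v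
  proof
    assume "v \<in> \<Union>R0"
    then obtain e where "e \<in> R0" "e \<inter> {u1, u2, u3} \<noteq> {}" using v by blast
    then show False using isolated by blast
  qed
  then show "u1 \<notin> \<Union>R0" "u2 \<notin> \<Union>R0" "u3 \<notin> \<Union>R0" by blast+
qed

lemma finite_R: "finite R" "\<forall>e\<in>R. finite e"
  using finite_subset_E[OF rem_edges_subset] finite_edge[OF rem_edge_in_E] by blast+

lemma finite_R0: "finite R0" "\<forall>e\<in>R0. finite e"
  using finite_R by auto

lemma ncomp_R: "ncomp R = ncomp R0 + 1"
  by (rule ncomp_remove_isolated_P3[OF finite_R P3 u1_neq_u2 u2_neq_u3])

lemma partner_rem_edge:
  assumes aa': "{a, a'} \<in> R"
  shows "{e\<in>E. a \<in> e} = {{u1, a}, {a, a'}}"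
proof (rule incident_edges_eq)
  show "{{u1, a}, {a, a'}} \<subseteq> {e\<in>E. a \<in> e}"
    using rem_edge_in_E[OF aa'] subsetD[OF A_subset u1a] by simp
  have "{a, a'} \<notin> A" using aa' by (simp add: rem_edges_def)
  then have "{u1, a} \<noteq> {a, a'}" using u1a by metis
  then show "degree E a \<le> card {{u1, a}, {a, a'}}" using degree_a by simp
qed

lemma partner_rem_edge_unique:
  assumes "{a, a'} \<in> R" "e \<in> R" "a \<in> e"
  shows "e = {a, a'}"
proof -
  have "e \<in> {e\<in>E. a \<in> e}" using assms(2,3) rem_edges_subset by blast
  then have "e \<in> {{u1, a}, {a, a'}}" unfolding partner_rem_edge[OF assms(1)] .
  moreover have "e \<noteq> {u1, a}" using assms(2) u1a by (auto simp: rem_edges_def)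
  ultimately show ?thesis by blast
qed

lemma partner_leaf:
  assumes "a \<in> \<Union>R"
  shows "{e\<in>A \<union> B. a \<in> e} = {{u1, a}}"
proof (intro equalityI subsetI)
  obtain e where e: "e \<in> R" "a \<in> e" using assms by blast
  then obtain a' where "e = {a, a'}" by (metis edge_obtain rem_edge_in_E)
  then have incident: "{e\<in>E. a \<in> e} = {{u1, a}, {a, a'}}" using e(1) partner_rem_edge by blast
  fix f assume "f \<in> {e\<in>A \<union> B. a \<in> e}"
  then have "f \<in> {e\<in>E. a \<in> e}" "f \<in> A \<union> B" using A_subset B_subset by auto
  moreover have "{a, a'} \<notin> A \<union> B" using e \<open>e = {a, a'}\<close> by (simp add: rem_edges_def)
  ultimately show "f \<in> {{u1, a}}" unfolding incident by auto
qed (use u1a in simp)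

lemma partner_not_in_B:
  assumes "a \<in> \<Union>R"
  shows "a \<notin> \<Union>B"
proof
  assume "a \<in> \<Union>B"
  then obtain e where "e \<in> B" "a \<in> e" by blast
  then have "e = {u1, a}" using partner_leaf[OF assms] by blast
  then show False using \<open>e \<in> B\<close> u1a A_Int_B by blast
qed

lemma near_u1u2_cases:
  assumes z: "z \<in> R" "near E {u1, u2} z"
  shows "z = {u1, u2} \<or> z = {u2, u3} \<or> a \<in> z \<or> b \<in> z"
proof -
  have touch: "z = {u1, u2} \<or> z = {u2, u3}" if "u1 \<in> z \<or> u2 \<in> z \<or> u3 \<in> z"
    using isolated[OF z(1)] that by blast
  from z(2) consider "{u1, u2} \<inter> z \<noteq> {}" | g where "g \<in> E" "g \<inter> {u1, u2} \<noteq> {}" "g \<inter> z \<noteq> {}"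
    unfolding near_def by blast
  then show ?thesis
  proof cases
    case 1
    then show ?thesis using touch by blast
  next
    case (2 g)
    then have "g \<in> {e\<in>E. u1 \<in> e} \<or> g \<in> {e\<in>E. u2 \<in> e}" by blast
    then have "g \<in> {{u1, u2}, {u1, a}, {u1, b}, {u2, u3}}" unfolding incident_u1 incident_u2 by blast
    then have "(u1 \<in> z \<or> u2 \<in> z \<or> u3 \<in> z) \<or> a \<in> z \<or> b \<in> z" using 2(3) by blast
    then show ?thesis using touch by blast
  qed
qed

lemma H_cycle_partner_edge_at_u1:
  assumes cyc: "is_cycle (H_adj E A B) xs" and x: "{u1, u2} \<in> set xs"
  obtains z where "z \<in> set xs" "z \<in> R" "z \<noteq> {u1, u2}" "z \<noteq> {u2, u3}" "a \<in> z \<or> b \<in> z"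
proof -
  obtain z1 z2 where z: "z1 \<in> set xs" "z2 \<in> set xs" "z1 \<noteq> z2" "z1 \<noteq> {u1, u2}" "z2 \<noteq> {u1, u2}"
    "H_adj E A B {u1, u2} z1" "H_adj E A B z2 {u1, u2}"
    using is_cycle_neighbours[OF cyc x] by blast
  have "z1 \<in> R" "near E {u1, u2} z1" "z2 \<in> R" "near E {u1, u2} z2"
    using H_adj_near[OF z(6)] H_adj_near[OF z(7)] near_commute by blast+
  then have "a \<in> z1 \<or> b \<in> z1 \<or> z1 = {u2, u3}" "a \<in> z2 \<or> b \<in> z2 \<or> z2 = {u2, u3}"
    using near_u1u2_cases z(4,5) by blast+
  then show ?thesis using that z \<open>z1 \<in> R\<close> \<open>z2 \<in> R\<close> by metis
qed

lemma exchange_at_u1: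
  "disjoint_matchings E (insert {u1, u2} (A - {{u1, a}})) B"
  "card (insert {u1, u2} (A - {{u1, a}}) \<union> B) = card (A \<union> B)"
  "rem_edges E (insert {u1, u2} (A - {{u1, a}})) B = insert {u1, a} (insert {u2, u3} R0)"
proof -
  have "u2 \<notin> \<Union>A" using centre by blast
  note ex = matching_pair_exchange[OF disjoint u1a u1u2 this]
  show "disjoint_matchings E (insert {u1, u2} (A - {{u1, a}})) B"
    "card (insert {u1, u2} (A - {{u1, a}}) \<union> B) = card (A \<union> B)"
    using ex(1,2) .
  have "{u1, u2} \<noteq> {u2, u3}" using u1_neq_u3 u1_neq_u2 by (simp add: doubleton_eq_iff)
  then show "rem_edges E (insert {u1, u2} (A - {{u1, a}})) B = insert {u1, a} (insert {u2, u3} R0)"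
    unfolding ex(3) using u2u3 by blast
qed

text \<open>Trading the matching edges u1 a and u3 d for the two edges of the P3 keeps the number
  of matched edges and attaches u1 and u3 as pendant vertices to other components.\<close>
lemma reattach_opposite:
  assumes a: "a \<in> \<Union>R" and d: "d \<in> \<Union>R"
  shows False
proof -
  define A1 where "A1 = insert {u1, u2} (A - {{u1, a}})"
  have R1: "rem_edges E B A1 = insert {u1, a} (insert {u2, u3} R0)"
    using exchange_at_u1(3) unfolding A1_def by (simp add: rem_edges_commute)
  have BA1: "disjoint_matchings E B A1"
    using exchange_at_u1(1) unfolding A1_def by (simp add: disjoint_matchings_commute)
  have u3u2: "{u3, u2} \<in> rem_edges E B A1"
    unfolding R1 insert_commute[of u3 u2 "{}"] by simp
  have "u2 \<notin> \<Union>B" using centre by blast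
  note ex = matching_pair_exchange[OF BA1 u3d u3u2 this]
  define B1 where "B1 = insert {u3, u2} (B - {{u3, d}})"
  have "{u2, u3} \<noteq> {u1, a}" using u1_neq_u2 u1_neq_u3 by (simp add: doubleton_eq_iff)
  then have "{u2, u3} \<notin> insert {u1, a} R0" by simp
  then have "insert {u1, a} (insert {u2, u3} R0) - {{u3, u2}} = insert {u1, a} R0"
    by (auto simp: insert_commute)
  then have rem: "rem_edges E A1 B1 = insert {u3, d} (insert {u1, a} R0)"
    using ex(3) unfolding R1 B1_def by (simp add: rem_edges_commute)
  have "a \<in> \<Union>R0" "d \<in> \<Union>R0"
  proof -
    interpret rev: P3_config V E A B u3 u2 u1 c d a b by (rule P3_config_reverse)
    show "a \<in> \<Union>R0" "d \<in> \<Union>R0" using a d partner_neq rev.partner_neq by auto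
  qed
  have "ncomp (insert {u1, a} R0) = ncomp R0"
    using ncomp_insert_pendant_edge[OF finite_R0 not_in_R0(1) \<open>a \<in> \<Union>R0\<close>] .
  moreover have "ncomp (insert {u3, d} (insert {u1, a} R0)) = ncomp (insert {u1, a} R0)"
  proof (rule ncomp_insert_pendant_edge)
    show "u3 \<notin> \<Union>(insert {u1, a} R0)" using not_in_R0 partner_neq u1_neq_u3 by simp
  qed (use finite_R0 \<open>d \<in> \<Union>R0\<close> in simp_all)
  moreover have "rem_ncomp E A B \<le> rem_ncomp E A1 B1"
  proof (rule opt_matching_pair_ncomp_le[OF opt])
    show "disjoint_matchings E A1 B1" using ex(1) unfolding B1_def by (simp add: disjoint_matchings_commute)
    show "card (A1 \<union> B1) = card (A \<union> B)"
      using ex(2) exchange_at_u1(2) unfolding A1_def B1_def by (simp add: Un_commute)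
  qed
  ultimately show False using ncomp_R rem by (simp add: rem_ncomp_eq_ncomp)
qed

lemma a_neq_c: "a \<noteq> c"
proof
  assume "a = c"
  then have "{u1, a} = {u3, a}" using matching_unique_edge[OF matching_A u1a u3c, of a] by simp
  then show False using u1_neq_u3 partner_neq(1) by (simp add: doubleton_eq_iff)
qed

lemma partner_edge_far:
  assumes "{a, a'} \<in> R"
  shows "a' \<notin> {u1, u2, u3}"
proof
  assume "a' \<in> {u1, u2, u3}"
  then have "{a, a'} = {u1, u2} \<or> {a, a'} = {u2, u3}" using isolated[OF assms] by blast
  then show False using partner_neq(1-3) by (auto simp: doubleton_eq_iff)
qed

lemma reattach_same:
  assumes a: "a \<in> \<Union>R" and c: "c \<in> \<Union>R" and apart: "\<not> reach (A \<union> B) u1 u3"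
  shows False
proof -
  define K where "K = {z. reach (A \<union> B) u3 z}"
  define A' where "A' = {e\<in>A. e \<inter> K = {}} \<union> {e\<in>B. e \<inter> K \<noteq> {}}"
  define B' where "B' = {e\<in>B. e \<inter> K = {}} \<union> {e\<in>A. e \<inter> K \<noteq> {}}"
  have "\<forall>e\<in>A \<union> B. card e = 2" using A_subset B_subset card_edge by blast
  note switch = kempe_switch[OF matching_A matching_B A_Int_B this, of u3, folded K_def, folded A'_def B'_def]
  have rem: "rem_edges E A' B' = R" unfolding rem_edges_def switch(4) ..
  have "u3 \<in> K" unfolding K_def by simp
  have "u1 \<notin> K"
  proof
    assume "u1 \<in> K"
    then have "reach (A \<union> B) u3 u1" unfolding K_def by simp
    then show False using apart reach_sym by metis
  qed
  have "x \<notin> K" if "{u1, x} \<in> A \<union> B" for x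
  proof
    assume "x \<in> K"
    then have "reach (A \<union> B) u3 x" unfolding K_def by simp
    moreover have "reach (A \<union> B) x u1" using that by (simp add: reach_edge insert_commute)
    ultimately have "reach (A \<union> B) u3 u1" by (rule reach_trans)
    then show False using \<open>u1 \<notin> K\<close> unfolding K_def by simp
  qed
  then have "a \<notin> K" "b \<notin> K" using u1a u1b by blast+
  have "P3_config V E A' B' u1 u2 u3 a b d c"
    unfolding P3_config_def P3_config_axioms_def
  proof (intro conjI subcubic_graph_axioms)
    show "opt_matching_pair E A' B'"
      using opt_matching_pair_same_union[OF opt _ switch(4)] switch(1-3)
      by (simp add: disjoint_matchings_def)
    show "isolated_P3 (rem_edges E A' B') u1 u2 u3" unfolding rem by (rule P3)
    show "u2 \<notin> \<Union>(A' \<union> B')" unfolding switch(4) by (rule centre)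
    show "{u1, a} \<in> A'" "{u1, b} \<in> B'"
      unfolding A'_def B'_def using u1a u1b \<open>u1 \<notin> K\<close> \<open>a \<notin> K\<close> \<open>b \<notin> K\<close> by auto
    show "{u3, d} \<in> A'" "{u3, c} \<in> B'"
      unfolding A'_def B'_def using u3c u3d \<open>u3 \<in> K\<close> by auto
  qed
  then interpret switched: P3_config V E A' B' u1 u2 u3 a b d c .
  show False using switched.reattach_opposite a c unfolding rem by blast
qed

lemma rotate_opt:
  assumes aa': "{a, a'} \<in> R"
  shows "opt_matching_pair E (insert {u1, u2} (A - {{u1, a}})) B"
proof (rule opt_matching_pairI[OF opt exchange_at_u1(1,2)])
  have "{a, a'} \<in> R0" using aa' partner_edge_far[OF aa'] partner_neq(1-3)
    by (auto simp: doubleton_eq_iff)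
  then have "a \<in> \<Union>(insert {u2, u3} R0)" by blast
  moreover have "u1 \<notin> \<Union>(insert {u2, u3} R0)" using not_in_R0 u1_neq_u2 u1_neq_u3 by simp
  ultimately have "ncomp (insert {u1, a} (insert {u2, u3} R0)) = ncomp (insert {u2, u3} R0)"
  proof (intro ncomp_insert_pendant_edge)
    show "finite (insert {u2, u3} R0)" "\<forall>e\<in>insert {u2, u3} R0. finite e" using finite_R0 by auto
  qed
  also have "\<dots> = ncomp R0 + 1"
    using ncomp_insert_isolated_edge[OF finite_R0 u2_neq_u3] not_in_R0 by simp
  finally show "rem_ncomp E (insert {u1, u2} (A - {{u1, a}})) B \<le> rem_ncomp E A B"
    using ncomp_R exchange_at_u1(3) by (simp add: rem_ncomp_eq_ncomp)
qed

lemma rotate_isolated_P3: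
  assumes aa': "{a, a'} \<in> R" and a'p: "{a', p} \<in> A" and a'q: "{a', q} \<in> B"
  shows "isolated_P3 (rem_edges E (insert {u1, u2} (A - {{u1, a}})) B) u1 a a'"
proof -
  have far: "a' \<notin> {u1, u2, u3}" by (rule partner_edge_far[OF aa'])
  have aa'R0: "{a, a'} \<in> R0" using aa' far partner_neq(1-3) by (auto simp: doubleton_eq_iff)
  have "{a', a} \<in> R" using aa' by (simp add: insert_commute)
  then have incident_a': "{e\<in>E. a' \<in> e} = {{a', a}, {a', p}, {a', q}}"
    by (rule doubly_matched_vertex(1)[OF disjoint _ a'p a'q])
  have "e = {u1, a} \<or> e = {a, a'}"
    if e: "e \<in> insert {u1, a} (insert {u2, u3} R0)" "e \<inter> {u1, a, a'} \<noteq> {}" for e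
  proof -
    have "{u2, u3} \<inter> {u1, a, a'} = {}" using far partner_neq u1_neq_u2 u1_neq_u3 by auto
    then consider "e = {u1, a}" | "e \<in> R0" "a \<in> e \<or> a' \<in> e"
      using e not_in_R0 by blast
    then show ?thesis
    proof cases
      case 2
      then consider "a \<in> e" | "a' \<in> e" "e \<in> {e\<in>E. a' \<in> e}" "e \<notin> A \<union> B"
        using rem_edge_in_E by (auto simp: rem_edges_def)
      then show ?thesis
      proof cases
        case 1
        then show ?thesis using partner_rem_edge_unique[OF aa'] \<open>e \<in> R0\<close> by blast
      next
        case 2
        then show ?thesis using a'p a'q unfolding incident_a' by (auto simp: insert_commute)
      qed
    qed simp
  qed
  moreover have "{a, a'} \<in> insert {u1, a} (insert {u2, u3} R0)" using aa'R0 by simp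
  moreover have "u1 \<noteq> a'" using far by auto
  ultimately show ?thesis unfolding isolated_P3_def exchange_at_u1(3) by simp
qed

lemma rotate_centre:
  assumes aa': "{a, a'} \<in> R"
  shows "a \<notin> \<Union>(insert {u1, u2} (A - {{u1, a}}) \<union> B)"
proof
  assume "a \<in> \<Union>(insert {u1, u2} (A - {{u1, a}}) \<union> B)"
  then obtain e where e: "e \<in> A - {{u1, a}} \<or> e \<in> B" "a \<in> e" using partner_neq by auto
  then have "e \<in> {e\<in>E. a \<in> e}" using A_subset B_subset by auto
  then have "e = {u1, a} \<or> e = {a, a'}" unfolding partner_rem_edge[OF aa'] by simp
  then show False using e u1a A_Int_B aa' by (auto simp: rem_edges_def)
qed

lemma P3_config_rotate:
  assumes aa': "{a, a'} \<in> R" and a'p: "{a', p} \<in> A" and a'q: "{a', q} \<in> B"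
  shows "P3_config V E (insert {u1, u2} (A - {{u1, a}})) B u1 a a' u2 b p q"
  unfolding P3_config_def P3_config_axioms_def
proof (intro conjI subcubic_graph_axioms)
  show "opt_matching_pair E (insert {u1, u2} (A - {{u1, a}})) B" by (rule rotate_opt[OF aa'])
  show "isolated_P3 (rem_edges E (insert {u1, u2} (A - {{u1, a}})) B) u1 a a'"
    by (rule rotate_isolated_P3[OF assms])
  show "a \<notin> \<Union>(insert {u1, u2} (A - {{u1, a}}) \<union> B)" by (rule rotate_centre[OF aa'])
  have "a' \<noteq> u1" "a' \<noteq> a" using partner_edge_far[OF aa'] edge_neq[OF rem_edge_in_E[OF aa']] by auto
  then show "{a', p} \<in> insert {u1, u2} (A - {{u1, a}})" using a'p by (auto simp: doubleton_eq_iff)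
qed (simp_all add: u1b a'q)

lemma partner_edge_doubly_matched:
  assumes a: "a \<in> \<Union>R" and c: "c \<in> \<Union>R" and connected: "reach (A \<union> B) u1 u3"
    and aa': "{a, a'} \<in> R"
  shows "a' \<in> \<Union>A" "a' \<in> \<Union>B"
proof -
  interpret rev: P3_config V E A B u3 u2 u1 c d a b by (rule P3_config_reverse)
  have leaf_a: "{e\<in>A \<union> B. a \<in> e} = {{u1, a}}" by (rule partner_leaf[OF a])
  have leaf_c: "{e\<in>A \<union> B. c \<in> e} = {{u3, c}}" by (rule rev.partner_leaf[OF c])
  have "a \<notin> \<Union>B" "c \<notin> \<Union>B" using partner_not_in_B[OF a] rev.partner_not_in_B[OF c] .
  have a'a: "{a', a} \<in> R" using aa' by (simp add: insert_commute)
  show "a' \<in> \<Union>B" using max_matching_pair_augment[OF max a'a] \<open>a \<notin> \<Union>B\<close> by blast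
  then obtain e where "e \<in> B" "a' \<in> e" by blast
  then obtain q where "e = {a', q}" "q \<noteq> a'" by (rule edge_obtain[OF subsetD[OF B_subset]])
  then have "{a', q} \<in> B" using \<open>e \<in> B\<close> by simp
  show "a' \<in> \<Union>A"
  proof (rule ccontr)
    assume "a' \<notin> \<Union>A"
    have "a' \<noteq> c"
    proof
      assume "a' = c"
      then show False using max_matching_pair_augment[OF max aa'] \<open>a \<notin> \<Union>B\<close> \<open>c \<notin> \<Union>B\<close> by blast
    qed
    have leaf_a': "{e\<in>A \<union> B. a' \<in> e} = {{a', q}}"
      using matching_incident_singleton[OF matching_B \<open>{a', q} \<in> B\<close> _ \<open>a' \<notin> \<Union>A\<close>]
      by (simp add: Un_commute)
    have "reach (A \<union> B) a u1" using u1a by (simp add: reach_edge insert_commute)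
    then have "reach (A \<union> B) a u3" using connected by (rule reach_trans)
    moreover have "reach (A \<union> B) u3 c" using u3c by (simp add: reach_edge)
    ultimately have "reach (A \<union> B) a c" by (rule reach_trans)
    moreover have "reach (A \<union> B) a a'"
      using max_matching_pair_kempe[OF max a'a \<open>a' \<notin> \<Union>A\<close> \<open>a \<notin> \<Union>B\<close>] by (rule reach_sym)
    moreover have "a \<noteq> a'" using edge_neq[OF rem_edge_in_E[OF aa']] .
    ultimately show False
      using matchings_no_three_leaves[OF matching_A matching_B leaf_a leaf_a' leaf_c]
        a_neq_c \<open>a' \<noteq> c\<close> by blast
  qed
qed

lemma H_cycle_near_partner_edge:
  assumes cyc: "is_cycle (H_adj E A B) xs" "{u1, u2} \<in> set xs"
    and b: "b \<notin> \<Union>R" and aa': "{a, a'} \<in> R"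
  obtains g where "g \<in> R" "g \<noteq> {a, a'}" "g \<noteq> {u1, u2}" "near E {a, a'} g"
proof -
  obtain z where z: "z \<in> set xs" "z \<in> R" "a \<in> z \<or> b \<in> z"
    using H_cycle_partner_edge_at_u1[OF cyc] by blast
  then have "z = {a, a'}" using b partner_rem_edge_unique[OF aa'] by blast
  then obtain z1 z2 where zz: "z1 \<noteq> z2" "z1 \<noteq> {a, a'}" "z2 \<noteq> {a, a'}"
    "H_adj E A B {a, a'} z1" "H_adj E A B z2 {a, a'}"
    using is_cycle_neighbours[OF cyc(1)] z(1) by metis
  have "z1 \<in> R" "near E {a, a'} z1" "z2 \<in> R" "near E {a, a'} z2"
    using H_adj_near[OF zz(4)] H_adj_near[OF zz(5)] near_commute by blast+
  then show ?thesis using that zz(1-3) by metis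
qed


lemma rotate_keeps_ends_connected:
  assumes a: "a \<in> \<Union>R" and connected: "reach (A \<union> B) u1 u3"
  shows "reach (insert {u1, u2} (A - {{u1, a}}) \<union> B) u1 u3"
proof -
  have "{a, u1} = {u1, a}" by (rule insert_commute)
  then have leaf_a: "{e\<in>A \<union> B. a \<in> e} = {{a, u1}}" using partner_leaf[OF a] by simp
  have "reach (A \<union> B) a u1" using \<open>{a, u1} = {u1, a}\<close> u1a by (simp add: reach_edge)
  then have "reach (A \<union> B) a u3" using connected by (rule reach_trans)
  then have "reach ((A \<union> B) - {{a, u1}}) u1 u3"
    using reach_from_leaf[OF leaf_a] partner_neq(3) by metis
  moreover have "(A \<union> B) - {{a, u1}} \<subseteq> insert {u1, u2} (A - {{u1, a}}) \<union> B"
    unfolding \<open>{a, u1} = {u1, a}\<close> by blast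
  ultimately show ?thesis by (rule reach_mono[rotated])
qed

text \<open>After rotating the P3 to u1 a a', the vertices u2, c and p would be three vertices of
  degree one in a single component of the union of the new matchings.\<close>
lemma rotated_ends_apart:
  assumes c: "c \<in> \<Union>R" and connected: "reach (A \<union> B) u1 u3"
    and aa': "{a, a'} \<in> R" and a'p: "{a', p} \<in> A" and a'q: "{a', q} \<in> B"
    and p: "p \<in> \<Union>(rem_edges E (insert {u1, u2} (A - {{u1, a}})) B)"
  shows "\<not> reach (insert {u1, u2} (A - {{u1, a}}) \<union> B) u1 a'"
proof
  define A1 where "A1 = insert {u1, u2} (A - {{u1, a}})"
  assume "reach (A1 \<union> B) u1 a'"
  interpret rev: P3_config V E A B u3 u2 u1 c d a b by (rule P3_config_reverse)
  interpret rot: P3_config V E A1 B u1 a a' u2 b p q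
    unfolding A1_def by (rule P3_config_rotate[OF aa' a'p a'q])
  interpret rot_rev: P3_config V E A1 B a' a u1 p q u2 b by (rule rot.P3_config_reverse)
  have a: "a \<in> \<Union>R" using aa' by blast
  have "u2 \<in> \<Union>(rem_edges E A1 B)" unfolding A1_def exchange_at_u1(3) by blast
  then have leaf_u2: "{e\<in>A1 \<union> B. u2 \<in> e} = {{u1, u2}}" by (rule rot.partner_leaf)
  have "p \<in> \<Union>(rem_edges E A1 B)" using p unfolding A1_def .
  then have leaf_p: "{e\<in>A1 \<union> B. p \<in> e} = {{a', p}}" by (rule rot_rev.partner_leaf)
  have "{u3, c} \<noteq> {u1, a}" using u1_neq_u3 partner_neq(3) by (auto simp: doubleton_eq_iff)
  then have u3c1: "{u3, c} \<in> A1" unfolding A1_def using u3c by blast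
  have leaf_c: "{e\<in>A1 \<union> B. c \<in> e} = {{u3, c}}"
  proof (intro equalityI subsetI)
    fix e assume e: "e \<in> {e\<in>A1 \<union> B. c \<in> e}"
    then have "e \<noteq> {u1, u2}" using rev.partner_neq(2,3) by auto
    then have "e \<in> {e\<in>A \<union> B. c \<in> e}" using e unfolding A1_def by auto
    then show "e \<in> {{u3, c}}" unfolding rev.partner_leaf[OF c] .
  qed (use u3c1 in simp)
  have "reach (A1 \<union> B) u1 u3" unfolding A1_def by (rule rotate_keeps_ends_connected[OF a connected])
  moreover have "reach (A1 \<union> B) u1 u2" "reach (A1 \<union> B) u3 c" "reach (A1 \<union> B) a' p"
    using rot.u1a u3c1 rot.u3c by (simp_all add: reach_edge)
  ultimately have "reach (A1 \<union> B) u2 c" "reach (A1 \<union> B) u2 p"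
    using \<open>reach (A1 \<union> B) u1 a'\<close> reach_trans reach_sym by meson+
  moreover have "u2 \<noteq> c" using rev.partner_neq(2) by simp
  moreover have "u2 \<noteq> p" using a'p centre by blast
  moreover have "c \<noteq> p"
  proof
    assume "c = p"
    then have "{u3, c} = {a', c}" using matching_unique_edge[OF matching_A u3c a'p, of c] by simp
    then show False using partner_edge_far[OF aa'] rev.partner_neq(1) by (auto simp: doubleton_eq_iff)
  qed
  ultimately show False
    using matchings_no_three_leaves[OF rot.matching_A rot.matching_B leaf_u2 leaf_c leaf_p] by blast
qed

lemma no_H_cycle_if_ends_connected:
  assumes a: "a \<in> \<Union>R" and c: "c \<in> \<Union>R" and b: "b \<notin> \<Union>R" and connected: "reach (A \<union> B) u1 u3"
    and cyc: "is_cycle (H_adj E A B) xs" "{u1, u2} \<in> set xs"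
  shows False
proof -
  obtain a' where aa': "{a, a'} \<in> R" using a by (metis UnionE edge_obtain rem_edge_in_E)
  obtain p q where a'p: "{a', p} \<in> A" and a'q: "{a', q} \<in> B"
    using partner_edge_doubly_matched[OF a c connected aa'] A_subset B_subset
    by (metis UnionE edge_obtain subsetD)
  define A1 where "A1 = insert {u1, u2} (A - {{u1, a}})"
  interpret rot: P3_config V E A1 B u1 a a' u2 b p q
    unfolding A1_def by (rule P3_config_rotate[OF aa' a'p a'q])
  interpret rot_rev: P3_config V E A1 B a' a u1 p q u2 b by (rule rot.P3_config_reverse)
  obtain g where g: "g \<in> R" "g \<noteq> {a, a'}" "g \<noteq> {u1, u2}" "near E {a, a'} g"
    using H_cycle_near_partner_edge[OF cyc b aa'] by blast
  have R1: "rem_edges E A1 B = insert {u1, a} (insert {u2, u3} R0)"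
    using exchange_at_u1(3) unfolding A1_def .
  have "g \<in> rem_edges E A1 B" using g(1,3) unfolding R1 by blast
  moreover have "near E {a', a} g" using g(4) by (simp add: insert_commute)
  ultimately have "g = {a', a} \<or> g = {a, u1} \<or> p \<in> g \<or> q \<in> g" by (rule rot_rev.near_u1u2_cases)
  moreover have "g \<noteq> {a, u1}" using g(1) u1a by (auto simp: rem_edges_def insert_commute)
  ultimately have "p \<in> g \<or> q \<in> g" using g(2) by (auto simp: insert_commute)
  moreover have "u2 \<in> \<Union>(rem_edges E A1 B)" unfolding R1 by blast
  ultimately show False
    using rot.reattach_opposite rot.reattach_same \<open>g \<in> rem_edges E A1 B\<close>
      rotated_ends_apart[OF c connected aa' a'p a'q] unfolding A1_def by blast
qed

lemma no_H_cycle_if_a_on_rem: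
  assumes a: "a \<in> \<Union>R"
    and cyc: "is_cycle (H_adj E A B) xs" "{u1, u2} \<in> set xs" "{u2, u3} \<in> set xs"
  shows False
proof -
  interpret rev: P3_config V E A B u3 u2 u1 c d a b by (rule P3_config_reverse)
  interpret swap: P3_config V E B A u1 u2 u3 b a d c by (rule P3_config_swap)
  have "{u3, u2} \<in> set xs" using cyc(3) by (simp add: insert_commute)
  then obtain z where "z \<in> R" "c \<in> z \<or> d \<in> z" using rev.H_cycle_partner_edge_at_u1[OF cyc(1)] by blast
  then consider "d \<in> \<Union>R" | "c \<in> \<Union>R" "b \<in> \<Union>R" | "c \<in> \<Union>R" "b \<notin> \<Union>R" by blast
  then show False
  proof cases
    case 1
    then show ?thesis using reattach_opposite[OF a] by blast
  next
    case 2
    then show ?thesis using swap.reattach_opposite by (simp add: rem_edges_commute)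
  next
    case 3
    then show ?thesis
      using no_H_cycle_if_ends_connected[OF a _ _ _ cyc(1,2)] reattach_same[OF a] by blast
  qed
qed

lemma no_H_cycle_through_P3:
  assumes cyc: "is_cycle (H_adj E A B) xs" "{u1, u2} \<in> set xs" "{u2, u3} \<in> set xs"
  shows False
proof -
  interpret swap: P3_config V E B A u1 u2 u3 b a d c by (rule P3_config_swap)
  obtain z where "z \<in> R" "a \<in> z \<or> b \<in> z" using H_cycle_partner_edge_at_u1[OF cyc(1,2)] by blast
  then consider "a \<in> \<Union>R" | "b \<in> \<Union>R" by blast
  then show False
  proof cases
    case 1
    then show ?thesis using no_H_cycle_if_a_on_rem cyc by blast
  next
    case 2
    then have "b \<in> \<Union>(rem_edges E B A)" by (simp add: rem_edges_commute)
    moreover have "is_cycle (H_adj E B A) xs" using cyc(1) by (simp add: H_adj_commute)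
    ultimately show ?thesis using swap.no_H_cycle_if_a_on_rem cyc(2,3) by blast
  qed
qed

end

theorem lemma4:
  fixes V :: "'a set" and E M1 M2 :: "'a set set" and u1 u2 u3 :: 'a
  assumes G: "simple_graph V E"
    and conn: "connected_graph V E"
    and maxdeg: "\<forall>v\<in>V. degree E v \<le> 3"
    and mindeg: "\<forall>v\<in>V. degree E v \<ge> 2"
    and no33: "\<forall>u v. {u, v} \<in> E \<longrightarrow> \<not> (degree E u = 3 \<and> degree E v = 3)"
    and M1: "matching E M1" and M2: "matching E M2" and disj: "M1 \<inter> M2 = {}"
    and maxM: "\<forall>N1 N2. matching E N1 \<and> matching E N2 \<and> N1 \<inter> N2 = {} \<longrightarrow>
                 card (N1 \<union> N2) \<le> card (M1 \<union> M2)"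
    and minC: "\<forall>N1 N2. matching E N1 \<and> matching E N2 \<and> N1 \<inter> N2 = {} \<and>
                 card (N1 \<union> N2) = card (M1 \<union> M2) \<longrightarrow>
                 rem_ncomp E M1 M2 \<le> rem_ncomp E N1 N2"
    and dist: "u1 \<noteq> u2" "u2 \<noteq> u3" "u1 \<noteq> u3"
    and comp: "{u1, u2, u3} \<in> components (\<Union>(rem_edges E M1 M2)) (rem_edges E M1 M2)"
    and e12: "{u1, u2} \<in> rem_edges E M1 M2"
    and e23: "{u2, u3} \<in> rem_edges E M1 M2"
    and n13: "{u1, u3} \<notin> rem_edges E M1 M2"
  shows "\<not> (\<exists>xs. is_cycle (H_adj E M1 M2) xs \<and> {u1, u2} \<in> set xs \<and> {u2, u3} \<in> set xs)"
proof
  assume "\<exists>xs. is_cycle (H_adj E M1 M2) xs \<and> {u1, u2} \<in> set xs \<and> {u2, u3} \<in> set xs"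
  then obtain xs where cyc: "is_cycle (H_adj E M1 M2) xs" "{u1, u2} \<in> set xs" "{u2, u3} \<in> set xs"
    by blast
  interpret subcubic_graph V E
    using G maxdeg no33 by unfold_locales
  have max: "max_matching_pair E M1 M2"
    using M1 M2 disj maxM by (simp add: max_matching_pair_def disjoint_matchings_def)
  have "rem_ncomp E M1 M2 \<le> rem_ncomp E N1 N2" if "max_matching_pair E N1 N2" for N1 N2
    using that max minC unfolding max_matching_pair_def disjoint_matchings_def by (meson le_antisym)
  then have opt: "opt_matching_pair E M1 M2" using max by (simp add: opt_matching_pair_def)
  have P3: "isolated_P3 (rem_edges E M1 M2) u1 u2 u3"
    using component_isolated_P3[OF _ comp e12 e23 n13 dist(3)] card_edge rem_edges_subset by blast
  have centre: "u2 \<notin> \<Union>(M1 \<union> M2)"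
    by (rule max_matching_pair_centre_unmatched[OF max e12 e23 dist(3)])
  obtain a b where "{u1, a} \<in> M1" "{u1, b} \<in> M2"
    using max_matching_pair_end_partners[OF max e12 centre] .
  moreover obtain c d where "{u3, c} \<in> M1" "{u3, d} \<in> M2"
    using max_matching_pair_end_partners[OF max _ centre] e23 by (metis insert_commute)
  ultimately interpret P3_config V E M1 M2 u1 u2 u3 a b c d
    using opt P3 centre by unfold_locales
  show False using no_H_cycle_through_P3[OF cyc] .
qed

end
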